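(* For every $m\ge 0$, $p_m(x)=p_0(x)\,q_m(x)$. Moreover $p_m$ is the characteristic polynomial of $J_m$, so $\mathrm{Spec}(J_m)$ consists of $\mathrm{Spec}(J_0)$ together with the zeros of $q_m$.
   Context: Let $k\ge 2$, $a_0,\dots,a_{k-1}\in\mathbb{R}$, $a_0\ne0$. Define $b_{0,j}=a_j$ ($0\le j\le k-1$) and for $m\ge0$: $b_{m+1,j}=a_jb_{m,0}+b_{m,j+1}$ ($0\le j\le k-2$), $b_{m+1,k-1}=a_{k-1}b_{m,0}$. These are the coefficients of the $m$-times expanded linear equation $z_{n+1}=\sum_{j=0}^{k-1}b_{m,j}z_{n-m-j}$ of $x_{n+1}=\sum_{j=0}^{k-1}a_jx_{n-j}$. Define the polynomials $$p_m(x)=x^{k+m}-\sum_{j=0}^{k-1}b_{m,j}x^{k-j-1},\qquad q_m(x)=x^m+\sum_{i=0}^{m-1}b_{i,0}x^{m-i-1},$$ with $q_0\equiv1$. $J_m$ is the $(m+k)\times(m+k)$ matrix whose first row is $(0,\dots,0,b_{m,0},b_{m,1},\dots,b_{m,k-1})$ (with $m$ leading zeros), with ones at positions $(i+1,i)$ for $i=1,\dots,m+k-1$ and zeros elsewhere (the Jacobian of the $m$-th expanded equation). *)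

theory Defs
  imports "Jordan_Normal_Form.Char_Poly" "HOL-Computational_Algebra.Polynomial"
begin

text \<open>Coefficients b_{m,j} of the m-times expanded equation, for given k and a_0..a_{k-1}
  (a given as a function nat => real; only a 0, ..., a (k-1) are used).
  Values for j >= k are irrelevant junk.\<close>
fun bcoef :: "nat \<Rightarrow> (nat \<Rightarrow> real) \<Rightarrow> nat \<Rightarrow> nat \<Rightarrow> real" where
  "bcoef k a 0 j = a j"
| "bcoef k a (Suc m) j =
     (if j + 1 < k then a j * bcoef k a m 0 + bcoef k a m (j + 1)
      else a (k - 1) * bcoef k a m 0)"

definition pm :: "nat \<Rightarrow> (nat \<Rightarrow> real) \<Rightarrow> nat \<Rightarrow> real poly" where
  "pm k a m = monom 1 (k + m) - (\<Sum>j<k. monom (bcoef k a m j) (k - j - 1))"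

definition qm :: "nat \<Rightarrow> (nat \<Rightarrow> real) \<Rightarrow> nat \<Rightarrow> real poly" where
  "qm k a m = monom 1 m + (\<Sum>i<m. monom (bcoef k a i 0) (m - i - 1))"

definition Jm :: "nat \<Rightarrow> (nat \<Rightarrow> real) \<Rightarrow> nat \<Rightarrow> real mat" where
  "Jm k a m = mat (m + k) (m + k)
     (\<lambda>(i, j). if i = 0 then (if j < m then 0 else bcoef k a m (j - m))
               else if i = j + 1 then 1 else 0)"

end

theory Submission
  imports Defs
begin

text \<open>Expanding once more multiplies p_m by x and feeds b_{m,0} times the original recurrence
  back in, which gives p_{m+1} = x p_m + b_{m,0} p_0; q_m obeys the same Horner-type
  recurrence q_{m+1} = x q_m + b_{m,0}, hence p_m = p_0 q_m. For the spectral statement,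
  J_m is a companion matrix: Laplace expansion of its characteristic matrix along the last
  column leaves only the first and the last row, whose minors are the characteristic matrix
  of the smaller companion matrix and a triangular matrix with -1 on the diagonal.\<close>

lemma coeff_pm:
  "coeff (pm k a m) n =
     (if n = k + m then 1 else 0) - (if n < k then bcoef k a m (k - 1 - n) else 0)"
proof -
  have "(\<Sum>j<k. if k - j - 1 = n then bcoef k a m j else 0) =
        (\<Sum>j<k. if j = k - 1 - n \<and> n < k then bcoef k a m (k - 1 - n) else 0)"
    by (rule sum.cong) auto
  also have "\<dots> = (if n < k then bcoef k a m (k - 1 - n) else 0)"
    by (cases "n < k") auto
  finally show ?thesis
    unfolding pm_def by (simp add: coeff_sum coeff_monom)
qed

lemma pm_Suc:
  assumes "0 < k"
  shows "pm k a (Suc m) = [:0, 1:] * pm k a m + Polynomial.smult (bcoef k a m 0) (pm k a 0)"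
proof (rule poly_eqI)
  fix n
  show "coeff (pm k a (Suc m)) n =
        coeff ([:0, 1:] * pm k a m + Polynomial.smult (bcoef k a m 0) (pm k a 0)) n"
  proof (cases n)
    case 0
    then show ?thesis using assms by (simp add: coeff_pm)
  next
    case (Suc n')
    show ?thesis
    proof (cases "n < k")
      case True
      define j where "j = k - 1 - n"
      have "k - 1 - n' = Suc j" "k - 1 - n = j" "Suc j < k"
        using True Suc by (auto simp: j_def)
      then show ?thesis
        using True unfolding Suc by (simp add: coeff_pm flip: pCons_0_as_mult)
    next
      case False
      then show ?thesis
        using Suc by (auto simp: coeff_pm simp flip: pCons_0_as_mult)
    qed
  qed
qed

lemma qm_Suc: "qm k a (Suc m) = [:0, 1:] * qm k a m + [:bcoef k a m 0:]"
proof -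
  have "(\<Sum>i<m. monom (bcoef k a i 0) (Suc m - i - 1)) =
        (\<Sum>i<m. pCons 0 (monom (bcoef k a i 0) (m - i - 1)))"
    by (rule sum.cong) (auto simp: Suc_diff_Suc simp flip: monom_Suc)
  then have "qm k a (Suc m) = pCons 0 (qm k a m) + [:bcoef k a m 0:]"
    unfolding qm_def by (simp add: monom_Suc monom_0 sum_pCons_0_commute)
  then show ?thesis
    by (simp only: pCons_0_as_mult[of "qm k a m"])
qed

lemma pm_eq_pm0_mult_qm:
  assumes "0 < k"
  shows "pm k a m = pm k a 0 * qm k a m"
proof (induction m)
  case 0
  show ?case by (simp add: qm_def)
next
  case (Suc m)
  have "pm k a (Suc m) =
        [:0, 1:] * (pm k a 0 * qm k a m) + Polynomial.smult (bcoef k a m 0) (pm k a 0)"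
    by (simp add: pm_Suc[OF assms] Suc)
  also have "\<dots> = pm k a 0 * qm k a (Suc m)"
    by (simp add: qm_Suc algebra_simps)
  finally show ?case .
qed

definition companion_mat :: "nat \<Rightarrow> (nat \<Rightarrow> 'a :: comm_ring_1) \<Rightarrow> 'a mat" where
  "companion_mat n c = mat n n (\<lambda>(i, j). if i = 0 then c j else if i = j + 1 then 1 else 0)"

lemma companion_mat_carrier [simp]: "companion_mat n c \<in> carrier_mat n n"
  by (simp add: companion_mat_def)

lemma dim_char_poly_matrix_companion_mat [simp]:
  "dim_row (char_poly_matrix (companion_mat n c)) = n"
  "dim_col (char_poly_matrix (companion_mat n c)) = n"
  by (simp_all add: char_poly_matrix_def companion_mat_def)

lemma char_poly_matrix_companion_mat:
  assumes "i < n" "j < n"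
  shows "char_poly_matrix (companion_mat n c) $$ (i, j) =
           (if i = j then [:0, 1:] else 0) - [:if i = 0 then c j else if i = j + 1 then 1 else 0:]"
  using assms by (simp add: char_poly_matrix_def companion_mat_def)

lemma char_poly_matrix_companion_mat_last_col:
  assumes "i < Suc n"
  shows "char_poly_matrix (companion_mat (Suc n) c) $$ (i, n) =
           (if i = n then [:0, 1:] else 0) - (if i = 0 then [:c n:] else 0)"
  using assms by (auto simp: char_poly_matrix_companion_mat)

lemma mat_delete_last_char_poly_matrix_companion_mat:
  "mat_delete (char_poly_matrix (companion_mat (Suc n) c)) n n =
     char_poly_matrix (companion_mat n c)"
  by (rule eq_matI) (auto simp: mat_delete_def char_poly_matrix_companion_mat)

lemma pCons_minus_one: "[:- 1:] = (- 1 :: 'a :: comm_ring_1 poly)"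
  by (metis minus_pCons pCons_one minus_zero)

lemma det_mat_delete_first_char_poly_matrix_companion_mat:
  "det (mat_delete (char_poly_matrix (companion_mat (Suc n) c)) 0 n) = (-1) ^ n"
proof -
  define U where "U = mat_delete (char_poly_matrix (companion_mat (Suc n) c)) 0 n"
  have U: "U \<in> carrier_mat n n"
    unfolding U_def carrier_mat_def by simp
  have U_entry: "U $$ (i, j) = (if Suc i = j then [:0, 1:] else 0) - [:if i = j then 1 else 0:]"
    if "i < n" "j < n" for i j
    using that by (simp add: U_def mat_delete_def char_poly_matrix_companion_mat)
  have "upper_triangular U"
    using U U_entry by (auto simp: upper_triangular_def)
  then have "det U = prod_list (diag_mat U)"
    using U by (rule det_upper_triangular)
  also have "diag_mat U = map (\<lambda>i. U $$ (i, i)) [0..<n]"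
    using U by (simp add: diag_mat_def)
  also have "\<dots> = map (\<lambda>i. -1) [0..<n]"
    by (rule map_cong) (simp_all add: U_entry pCons_minus_one)
  finally show ?thesis
    by (simp add: U_def map_replicate_const)
qed

lemma char_poly_companion_mat_Suc:
  "char_poly (companion_mat (Suc n) c) = [:0, 1:] * char_poly (companion_mat n c) - [:c n:]"
proof -
  define D where "D = char_poly_matrix (companion_mat (Suc n) c)"
  have D: "D \<in> carrier_mat (Suc n) (Suc n)"
    by (simp add: D_def)
  have "det D = (\<Sum>i<Suc n. D $$ (i, n) * cofactor D i n)"
    using D by (rule laplace_expansion_column) simp
  also have "\<dots> = [:0, 1:] * cofactor D n n - [:c n:] * cofactor D 0 n"
    by (simp add: D_def char_poly_matrix_companion_mat_last_col left_diff_distrib sum_subtractf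
        if_distrib[of "\<lambda>x. x * _"] cong: if_cong)
  also have "cofactor D n n = char_poly (companion_mat n c)"
    by (simp add: cofactor_def D_def mat_delete_last_char_poly_matrix_companion_mat char_poly_def)
  also have "cofactor D 0 n = 1"
    by (simp add: cofactor_def D_def det_mat_delete_first_char_poly_matrix_companion_mat
        flip: power_mult_distrib)
  finally show ?thesis
    by (simp add: char_poly_def D_def)
qed

lemma char_poly_companion_mat:
  "char_poly (companion_mat n c) = monom 1 n - (\<Sum>j<n. monom (c j) (n - 1 - j))"
proof (induction n)
  case 0
  show ?case
    by (simp add: char_poly_def char_poly_matrix_def companion_mat_def monom_0)
next
  case (Suc n)
  have "(\<Sum>j<n. monom (c j) (Suc n - 1 - j)) = [:0, 1:] * (\<Sum>j<n. monom (c j) (n - 1 - j))"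
    by (auto simp: sum_distrib_left Suc_diff_Suc simp flip: pCons_0_as_mult monom_Suc
        intro: sum.cong)
  then show ?case
    by (simp add: char_poly_companion_mat_Suc Suc right_diff_distrib monom_0
        flip: pCons_0_as_mult monom_Suc)
qed

lemma Jm_eq_companion_mat:
  "Jm k a m = companion_mat (m + k) (\<lambda>j. if j < m then 0 else bcoef k a m (j - m))"
  by (simp add: Jm_def companion_mat_def)

lemma Jm_carrier: "Jm k a m \<in> carrier_mat (m + k) (m + k)"
  by (simp add: Jm_eq_companion_mat)

lemma char_poly_Jm: "char_poly (Jm k a m) = pm k a m"
proof -
  define c where "c j = (if j < m then 0 else bcoef k a m (j - m))" for j
  have "(\<Sum>j<m + k. monom (c j) (m + k - 1 - j)) =
        (\<Sum>j\<in>{0 + m..<k + m}. monom (c j) (m + k - 1 - j))"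
    by (rule sum.mono_neutral_right) (auto simp: c_def)
  also have "\<dots> = (\<Sum>j<k. monom (bcoef k a m j) (k - j - 1))"
    by (simp only: sum.shift_bounds_nat_ivl) (simp add: c_def lessThan_atLeast0 add.commute)
  finally show ?thesis
    by (simp add: Jm_eq_companion_mat c_def[abs_def] char_poly_companion_mat pm_def add.commute)
qed

lemma eigenvalue_of_real_iff_root_char_poly:
  assumes "A \<in> carrier_mat n n"
  shows "eigenvalue (map_mat complex_of_real A) z \<longleftrightarrow>
           poly (map_poly complex_of_real (char_poly A)) z = 0"
  using assms by (simp add: eigenvalue_root_char_poly of_real_hom.char_poly_hom)

theorem mainTheorem5:
  fixes k :: nat and a :: "nat \<Rightarrow> real"
  assumes "k \<ge> 2" and "a 0 \<noteq> 0"
  shows "\<forall>m. pm k a m = pm k a 0 * qm k a m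
          \<and> char_poly (Jm k a m) = pm k a m
          \<and> {z. eigenvalue (map_mat complex_of_real (Jm k a m)) z}
              = {z. eigenvalue (map_mat complex_of_real (Jm k a 0)) z}
                \<union> {z. poly (map_poly complex_of_real (qm k a m)) z = 0}"
proof (intro allI conjI)
  interpret of_real_poly: map_poly_comm_ring_hom complex_of_real ..
  fix m
  show factorization: "pm k a m = pm k a 0 * qm k a m"
    using assms(1) by (intro pm_eq_pm0_mult_qm) simp
  show "char_poly (Jm k a m) = pm k a m"
    by (rule char_poly_Jm)
  have "eigenvalue (map_mat complex_of_real (Jm k a m')) z \<longleftrightarrow>
          poly (map_poly complex_of_real (pm k a m')) z = 0" for m' z
    by (simp only: eigenvalue_of_real_iff_root_char_poly[OF Jm_carrier] char_poly_Jm)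
  then show "{z. eigenvalue (map_mat complex_of_real (Jm k a m)) z}
              = {z. eigenvalue (map_mat complex_of_real (Jm k a 0)) z}
                \<union> {z. poly (map_poly complex_of_real (qm k a m)) z = 0}"
    by (auto simp: factorization of_real_poly.hom_mult)
qed

end
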